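(* Let $X$ be a real Hilbert space, let $\rho>-1$, and let $A\colon X\rightrightarrows X$ be $\rho$-comonotone. Then $$\operatorname{gra} A=\{(J_A x,\,(\mathrm{Id}-J_A)x) : x\in \operatorname{ran}(\mathrm{Id}+A)\}.$$ Moreover, $A$ is maximally $\rho$-comonotone if and only if $\operatorname{ran}(\mathrm{Id}+A)=X$, in which case $$\operatorname{gra} A=\{(J_A x,\,(\mathrm{Id}-J_A)x) : x\in X\}.$$
   Context: $X$ is a real Hilbert space with inner product $\langle\cdot,\cdot\rangle$ and norm $\|\cdot\|$; $\mathrm{Id}$ is the identity on $X$. For a set-valued operator $A\colon X\rightrightarrows X$, $\operatorname{gra}A=\{(x,u): u\in Ax\}$, $A^{-1}$ is the operator with $\operatorname{gra}A^{-1}=\{(u,x):(x,u)\in\operatorname{gra}A\}$, and the resolvent is $J_A=(\mathrm{Id}+A)^{-1}$ (whose domain is $\operatorname{ran}(\mathrm{Id}+A)$). For $\rho\in\mathbb R$, $A$ is $\rho$-comonotone if $\langle x-y,u-v\rangle\ge\rho\|u-v\|^2$ for all $(x,u),(y,v)\in\operatorname{gra}A$; it is maximally $\rho$-comonotone if it is $\rho$-comonotone and no $\rho$-comonotone operator has a graph properly containing $\operatorname{gra}A$. *)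

theory Defs
  imports "HOL-Analysis.Analysis"
begin

definition gra :: "('a \<Rightarrow> 'a set) \<Rightarrow> ('a \<times> 'a) set" where
  "gra A = {(x, u). u \<in> A x}"

definition ran_Id_plus :: "('a::real_vector \<Rightarrow> 'a set) \<Rightarrow> 'a set" where
  "ran_Id_plus A = {x + u | x u. u \<in> A x}"

text \<open>Resolvent J_A = (Id + A)^{-1}, used as a point-valued map on ran (Id + A):
  J_A x is the (unique, under comonotonicity with rho > -1) p with x in p + A p.\<close>
definition resolvent :: "('a::real_vector \<Rightarrow> 'a set) \<Rightarrow> 'a \<Rightarrow> 'a" where
  "resolvent A x = (THE p. x - p \<in> A p)"

definition comonotone :: "real \<Rightarrow> ('a::real_inner \<Rightarrow> 'a set) \<Rightarrow> bool" where
  "comonotone \<rho> A \<longleftrightarrow>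
     (\<forall>x u y v. u \<in> A x \<longrightarrow> v \<in> A y \<longrightarrow> inner (x - y) (u - v) \<ge> \<rho> * (norm (u - v))\<^sup>2)"

definition max_comonotone :: "real \<Rightarrow> ('a::real_inner \<Rightarrow> 'a set) \<Rightarrow> bool" where
  "max_comonotone \<rho> A \<longleftrightarrow> comonotone \<rho> A \<and>
     (\<forall>B. comonotone \<rho> B \<longrightarrow> gra A \<subseteq> gra B \<longrightarrow> gra B = gra A)"

end

theory Submission
  imports Defs
begin

(* With \<mu> = 1 + \<rho> > 0, \<rho>-comonotonicity of A says exactly that the map y + v \<mapsto> 2\<mu>v - (y + v),
   for v \<in> A y, is well defined and nonexpansive. In particular Id + A is injective on gra A, which
   gives the description of gra A through the resolvent, and if Id + A is onto then every
   \<rho>-comonotone extension of A is already contained in gra A.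
   Conversely, by the Kirszbraun-Valentine theorem this nonexpansive map extends to any further
   point z; writing its value at z as 2\<mu>u - z shows that (z - u, u) can be added to gra A without
   destroying \<rho>-comonotonicity, so a maximal A contains it and z \<in> ran (Id + A).
   The extension theorem is proved in two steps: finitely many of the relevant balls meet (minimise
   the largest excess over the convex hull of their centres), and in a Hilbert space closed convex
   sets with the finite intersection property, one of them bounded, have a common point
   (points of nearly minimal norm in finite intersections form a Cauchy sequence). *)

section \<open>Weighted variances\<close>

lemma weighted_sum_norm_diff_sq:
  fixes a :: "'i \<Rightarrow> 'a::real_inner"
  assumes "sum l I = 1"
  shows "(\<Sum>k\<in>I. l k * (norm (b - a k))\<^sup>2)
    = (norm b)\<^sup>2 - 2 * inner b (\<Sum>k\<in>I. l k *\<^sub>R a k) + (\<Sum>k\<in>I. l k * (norm (a k))\<^sup>2)"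
proof -
  have "(\<Sum>k\<in>I. l k * (norm (b - a k))\<^sup>2)
      = (\<Sum>k\<in>I. l k) * (norm b)\<^sup>2 - 2 * (\<Sum>k\<in>I. l k * inner b (a k)) + (\<Sum>k\<in>I. l k * (norm (a k))\<^sup>2)"
    by (simp add: power2_norm_eq_inner inner_diff inner_commute algebra_simps
        sum.distrib sum_subtractf sum_distrib_left sum_distrib_right)
  then show ?thesis
    using assms by (simp add: inner_sum_right)
qed

lemma weighted_variance_eq:
  fixes a :: "'i \<Rightarrow> 'a::real_inner"
  assumes "sum l I = 1"
  shows "(\<Sum>k\<in>I. l k * (norm ((\<Sum>j\<in>I. l j *\<^sub>R a j) - a k))\<^sup>2)
    = (\<Sum>k\<in>I. l k * (norm (a k))\<^sup>2) - (norm (\<Sum>j\<in>I. l j *\<^sub>R a j))\<^sup>2"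
  using weighted_sum_norm_diff_sq[OF assms, of "\<Sum>j\<in>I. l j *\<^sub>R a j" a]
  by (simp add: power2_norm_eq_inner)

lemma weighted_variance_le:
  fixes a :: "'i \<Rightarrow> 'a::real_inner"
  assumes "sum l I = 1"
  shows "(\<Sum>k\<in>I. l k * (norm ((\<Sum>j\<in>I. l j *\<^sub>R a j) - a k))\<^sup>2) \<le> (\<Sum>k\<in>I. l k * (norm (b - a k))\<^sup>2)"
proof -
  let ?m = "\<Sum>j\<in>I. l j *\<^sub>R a j"
  have "(norm (b - ?m))\<^sup>2 = (norm b)\<^sup>2 - 2 * inner b ?m + (norm ?m)\<^sup>2"
    by (simp add: power2_norm_eq_inner inner_diff inner_commute)
  then show ?thesis
    unfolding weighted_variance_eq[OF assms] weighted_sum_norm_diff_sq[OF assms]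
    using zero_le_power2[of "norm (b - ?m)"] by linarith
qed

lemma weighted_variance_eq_pairwise:
  fixes a :: "'i \<Rightarrow> 'a::real_inner"
  assumes "sum l I = 1"
  shows "(\<Sum>k\<in>I. l k * (norm ((\<Sum>j\<in>I. l j *\<^sub>R a j) - a k))\<^sup>2)
    = (\<Sum>k\<in>I. l k * (\<Sum>j\<in>I. l j * (norm (a k - a j))\<^sup>2)) / 2"
proof -
  let ?m = "\<Sum>j\<in>I. l j *\<^sub>R a j"
  define q where "q = (\<Sum>j\<in>I. l j * (norm (a j))\<^sup>2)"
  have "(\<Sum>k\<in>I. l k * (\<Sum>j\<in>I. l j * (norm (a k - a j))\<^sup>2))
      = (\<Sum>k\<in>I. l k * ((norm (a k))\<^sup>2 - 2 * inner (a k) ?m + q))"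
    using weighted_sum_norm_diff_sq[OF assms, of "a _" a] by (simp add: q_def)
  also have "\<dots> = q - 2 * (\<Sum>k\<in>I. l k * inner (a k) ?m) + (\<Sum>k\<in>I. l k) * q"
    by (simp add: algebra_simps sum.distrib sum_subtractf sum_distrib_left sum_distrib_right flip: q_def)
  also have "(\<Sum>k\<in>I. l k * inner (a k) ?m) = (norm ?m)\<^sup>2"
    by (simp add: inner_sum_left power2_norm_eq_inner)
  finally show ?thesis
    using assms by (simp add: weighted_variance_eq q_def)
qed

lemma ex_le_if_weighted_sum_le:
  fixes f g :: "'i \<Rightarrow> real"
  assumes "\<forall>k\<in>I. 0 \<le> l k" "sum l I = 1" "(\<Sum>k\<in>I. l k * f k) \<le> (\<Sum>k\<in>I. l k * g k)"
  shows "\<exists>k\<in>I. f k \<le> g k"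
proof (rule ccontr)
  assume "\<not> ?thesis"
  then have less: "\<forall>k\<in>I. g k < f k" by auto
  have "finite I" using assms(2) sum.infinite by fastforce
  obtain k where k: "k \<in> I" "0 < l k"
    using assms(1,2) by (metis less_eq_real_def sum_nonpos zero_less_one not_le)
  have "(\<Sum>k\<in>I. l k * g k) < (\<Sum>k\<in>I. l k * f k)"
    using \<open>finite I\<close> k less assms(1)
    by (intro sum_strict_mono_ex1) (auto intro: mult_left_mono mult_strict_left_mono less_imp_le)
  then show False using assms(3) by simp
qed

lemma barycentre_in_some_ball:
  fixes a x :: "'i \<Rightarrow> 'a::real_inner"
  assumes "\<forall>k\<in>I. 0 \<le> l k" "sum l I = 1"
    and nonexp: "\<forall>k\<in>I. \<forall>j\<in>I. norm (a k - a j) \<le> norm (x k - x j)"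
  shows "\<exists>k\<in>I. (norm ((\<Sum>j\<in>I. l j *\<^sub>R a j) - a k))\<^sup>2 \<le> (norm (z - x k))\<^sup>2"
proof (rule ex_le_if_weighted_sum_le[OF assms(1,2)])
  have "(\<Sum>k\<in>I. l k * (\<Sum>j\<in>I. l j * (norm (a k - a j))\<^sup>2))
      \<le> (\<Sum>k\<in>I. l k * (\<Sum>j\<in>I. l j * (norm (x k - x j))\<^sup>2))"
    using assms(1) nonexp
    by (intro sum_mono mult_left_mono power_mono) auto
  then have "(\<Sum>k\<in>I. l k * (norm ((\<Sum>j\<in>I. l j *\<^sub>R a j) - a k))\<^sup>2)
      \<le> (\<Sum>k\<in>I. l k * (norm ((\<Sum>j\<in>I. l j *\<^sub>R x j) - x k))\<^sup>2)"
    unfolding weighted_variance_eq_pairwise[OF assms(2)] by simp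
  also have "\<dots> \<le> (\<Sum>k\<in>I. l k * (norm (z - x k))\<^sup>2)"
    by (rule weighted_variance_le[OF assms(2)])
  finally show "(\<Sum>k\<in>I. l k * (norm ((\<Sum>j\<in>I. l j *\<^sub>R a j) - a k))\<^sup>2)
      \<le> (\<Sum>k\<in>I. l k * (norm (z - x k))\<^sup>2)" .
qed

section \<open>Common points of finitely many balls\<close>

lemma continuous_on_Max_image:
  fixes f :: "'i \<Rightarrow> 'a::topological_space \<Rightarrow> 'b::linorder_topology"
  assumes "finite F" "F \<noteq> {}" "\<And>k. k \<in> F \<Longrightarrow> continuous_on S (f k)"
  shows "continuous_on S (\<lambda>x. Max ((\<lambda>k. f k x) ` F))"
  using assms
proof (induction F rule: finite_ne_induct)
  case (insert k F)
  then show ?case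
    by (simp add: continuous_on_max)
qed simp

lemma compact_convex_descent_point:
  fixes S :: "'a::real_inner set"
  assumes "compact S" "convex S" "S \<noteq> {}" "u \<notin> S"
  obtains q where "q \<in> S" "\<And>c. c \<in> S \<Longrightarrow> inner (u - c) (q - u) < 0"
proof -
  have "continuous_on S (dist u)"
    by (intro continuous_intros)
  then obtain q where q: "q \<in> S" "\<And>c. c \<in> S \<Longrightarrow> dist u q \<le> dist u c"
    using continuous_attains_inf[OF assms(1,3)] by blast
  have "inner (u - c) (q - u) < 0" if "c \<in> S" for c
  proof -
    have "inner (u - q) (c - q) \<le> 0"
      using any_closest_point_dot[OF assms(2) compact_imp_closed[OF assms(1)] q(1) that] q(2) by blast
    moreover have "0 < (norm (u - q))\<^sup>2"
      using q(1) assms(4) by auto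
    moreover have "inner (u - c) (q - u) = inner (u - q) (c - q) - (norm (u - q))\<^sup>2"
      by (simp add: power2_norm_eq_inner inner_diff inner_commute algebra_simps)
    ultimately show ?thesis by linarith
  qed
  with q(1) show thesis using that by blast
qed

lemma eventually_norm_diff_sq_less:
  fixes u c d :: "'a::real_inner"
  assumes "(norm (u - c))\<^sup>2 \<le> m" "(norm (u - c))\<^sup>2 = m \<Longrightarrow> inner (u - c) d < 0"
  shows "\<forall>\<^sub>F t in at_right 0. (norm (u + t *\<^sub>R d - c))\<^sup>2 < m"
proof -
  define g where "g t = 2 * inner (u - c) d + t * (norm d)\<^sup>2" for t :: real
  have expand: "(norm (u + t *\<^sub>R d - c))\<^sup>2 = (norm (u - c))\<^sup>2 + t * g t" for t
    unfolding g_def power2_norm_eq_inner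
    by (simp add: inner_add inner_diff inner_commute algebra_simps power2_eq_square)
  have g: "(g \<longlongrightarrow> g 0) (at_right 0)" and lin: "((\<lambda>t. t * g t) \<longlongrightarrow> 0 * g 0) (at_right 0)"
    unfolding g_def by (intro tendsto_intros)+
  show ?thesis
  proof (cases "(norm (u - c))\<^sup>2 = m")
    case True
    then have "g 0 < 0"
      using assms(2) by (simp add: g_def)
    then have "\<forall>\<^sub>F t in at_right 0. g t < 0 \<and> 0 < t"
      using order_tendstoD(2)[OF g] eventually_at_right_less eventually_conj by blast
    then show ?thesis
      by (rule eventually_mono) (simp add: expand True mult_pos_neg)
  next
    case False
    then have "(norm (u - c))\<^sup>2 + 0 * g 0 < m"
      using assms(1) by simp
    then show ?thesis
      using order_tendstoD(2)[OF tendsto_add[OF tendsto_const lin]] by (simp add: expand)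
  qed
qed

lemma convex_hull_image_weights:
  fixes c :: "'i \<Rightarrow> 'a::real_vector"
  assumes "finite I" "w \<in> convex hull (c ` I)"
  obtains l where "\<forall>i\<in>I. 0 \<le> l i" "sum l I = 1" "w = (\<Sum>i\<in>I. l i *\<^sub>R c i)"
proof -
  have "c ` I = (\<Union>i\<in>I. {c i})"
    by blast
  then obtain l s where "\<forall>i\<in>I. 0 \<le> l i" "sum l I = 1" "\<forall>i\<in>I. s i \<in> {c i}"
    "w = (\<Sum>i\<in>I. l i *\<^sub>R s i)"
    using assms convex_hull_finite_union[of I "\<lambda>i. {c i}"] by auto
  then show thesis
    by (intro that) (auto intro: sum.cong)
qed

definition max_excess :: "('i \<Rightarrow> 'a::real_normed_vector) \<Rightarrow> ('i \<Rightarrow> real) \<Rightarrow> 'i set \<Rightarrow> 'a \<Rightarrow> real"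
  where "max_excess c R F u = Max ((\<lambda>k. (norm (u - c k))\<^sup>2 - R k) ` F)"

lemma max_excess_ge: "finite F \<Longrightarrow> k \<in> F \<Longrightarrow> (norm (u - c k))\<^sup>2 - R k \<le> max_excess c R F u"
  unfolding max_excess_def by simp

lemma max_excess_less_iff:
  "finite F \<Longrightarrow> F \<noteq> {} \<Longrightarrow> max_excess c R F u < t \<longleftrightarrow> (\<forall>k\<in>F. (norm (u - c k))\<^sup>2 - R k < t)"
  unfolding max_excess_def by simp

lemma max_excess_le_iff:
  "finite F \<Longrightarrow> F \<noteq> {} \<Longrightarrow> max_excess c R F u \<le> t \<longleftrightarrow> (\<forall>k\<in>F. (norm (u - c k))\<^sup>2 - R k \<le> t)"
  unfolding max_excess_def by simp

lemma max_excess_attained: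
  "finite F \<Longrightarrow> F \<noteq> {} \<Longrightarrow> \<exists>k\<in>F. (norm (u - c k))\<^sup>2 - R k = max_excess c R F u"
  unfolding max_excess_def using Max_in[of "(\<lambda>k. (norm (u - c k))\<^sup>2 - R k) ` F"] by fastforce

lemma max_excess_minimiser_in_active_hull:
  fixes c :: "'i \<Rightarrow> 'a::real_inner"
  assumes "finite F" "F \<noteq> {}" "u \<in> convex hull (c ` F)"
    and min: "\<And>w. w \<in> convex hull (c ` F) \<Longrightarrow> max_excess c R F u \<le> max_excess c R F w"
  shows "u \<in> convex hull (c ` {k \<in> F. (norm (u - c k))\<^sup>2 - R k = max_excess c R F u})"
    (is "u \<in> convex hull (c ` ?I)")
proof (rule ccontr)
  assume "u \<notin> convex hull (c ` ?I)"
  moreover have "compact (convex hull (c ` ?I))" "convex hull (c ` ?I) \<noteq> {}"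
    using assms(1,2) max_excess_attained[OF assms(1,2)] by (auto simp: finite_imp_compact_convex_hull)
  ultimately obtain q where q: "q \<in> convex hull (c ` ?I)"
    and descent: "\<And>y. y \<in> convex hull (c ` ?I) \<Longrightarrow> inner (u - y) (q - u) < 0"
    using compact_convex_descent_point[OF _ convex_convex_hull] by blast
  let ?m = "max_excess c R F u"
  have "\<forall>\<^sub>F t in at_right 0. (norm (u + t *\<^sub>R (q - u) - c k))\<^sup>2 < ?m + R k" if "k \<in> F" for k
  proof (rule eventually_norm_diff_sq_less)
    show "(norm (u - c k))\<^sup>2 \<le> ?m + R k"
      using max_excess_ge[of F k u c R] assms(1) that by simp
    show "inner (u - c k) (q - u) < 0" if "(norm (u - c k))\<^sup>2 = ?m + R k"
      using that \<open>k \<in> F\<close> by (intro descent hull_inc) auto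
  qed
  then have "\<forall>\<^sub>F t in at_right 0. \<forall>k\<in>F. (norm (u + t *\<^sub>R (q - u) - c k))\<^sup>2 < ?m + R k"
    by (intro eventually_ball_finite assms(1)) blast
  moreover have "\<forall>\<^sub>F t in at_right (0::real). t \<in> {0<..<1}"
    by (rule eventually_at_right_real) simp
  ultimately have "\<forall>\<^sub>F t in at_right 0.
      (\<forall>k\<in>F. (norm (u + t *\<^sub>R (q - u) - c k))\<^sup>2 < ?m + R k) \<and> t \<in> {0<..<1}"
    by (rule eventually_conj)
  then obtain t where t: "0 < t" "t < 1" "\<forall>k\<in>F. (norm (u + t *\<^sub>R (q - u) - c k))\<^sup>2 < ?m + R k"
    using eventually_happens'[OF trivial_limit_at_right_real] by force
  have "q \<in> convex hull (c ` F)"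
    using q hull_mono[of "c ` ?I" "c ` F"] by auto
  then have "(1 - t) *\<^sub>R u + t *\<^sub>R q \<in> convex hull (c ` F)"
    using assms(3) t(1,2) by (intro convexD) auto
  moreover have "(1 - t) *\<^sub>R u + t *\<^sub>R q = u + t *\<^sub>R (q - u)"
    by (simp add: algebra_simps)
  moreover have "max_excess c R F (u + t *\<^sub>R (q - u)) < ?m"
    using t(3) by (simp add: max_excess_less_iff[OF assms(1,2)] algebra_simps)
  ultimately show False
    using min[of "u + t *\<^sub>R (q - u)"] by simp
qed

lemma finite_balls_common_point:
  fixes c :: "'i \<Rightarrow> 'a::real_inner" and R :: "'i \<Rightarrow> real"
  assumes "finite F" "F \<noteq> {}"
    and covered: "\<And>I l. I \<subseteq> F \<Longrightarrow> I \<noteq> {} \<Longrightarrow> \<forall>i\<in>I. 0 \<le> l i \<Longrightarrow> sum l I = 1 \<Longrightarrow>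
      \<exists>k\<in>I. (norm ((\<Sum>i\<in>I. l i *\<^sub>R c i) - c k))\<^sup>2 \<le> R k"
  shows "\<exists>u. \<forall>k\<in>F. (norm (u - c k))\<^sup>2 \<le> R k"
proof -
  define H where "H = convex hull (c ` F)"
  have "compact H" "H \<noteq> {}"
    using assms(1,2) by (auto simp: H_def finite_imp_compact_convex_hull)
  moreover have "continuous_on H (max_excess c R F)"
    unfolding max_excess_def[abs_def]
    by (rule continuous_on_Max_image[OF assms(1,2)]) (intro continuous_intros)
  ultimately obtain u where "u \<in> H" and u_min: "\<And>w. w \<in> H \<Longrightarrow> max_excess c R F u \<le> max_excess c R F w"
    using continuous_attains_inf[of H "max_excess c R F"] by auto
  define I where "I = {k \<in> F. (norm (u - c k))\<^sup>2 - R k = max_excess c R F u}"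
  have "u \<in> convex hull (c ` I)"
    unfolding I_def using assms(1,2) \<open>u \<in> H\<close> u_min unfolding H_def
    by (rule max_excess_minimiser_in_active_hull)
  moreover have "finite I" "I \<subseteq> F" "I \<noteq> {}"
    using assms(1) max_excess_attained[OF assms(1,2), of u c R] by (auto simp: I_def)
  ultimately obtain l where "\<forall>i\<in>I. 0 \<le> l i" "sum l I = 1" "u = (\<Sum>i\<in>I. l i *\<^sub>R c i)"
    using convex_hull_image_weights by blast
  then obtain k where "k \<in> I" "(norm (u - c k))\<^sup>2 \<le> R k"
    using covered[OF \<open>I \<subseteq> F\<close> \<open>I \<noteq> {}\<close>] by auto
  then have "max_excess c R F u \<le> 0"
    by (simp add: I_def)
  then show ?thesis
    by (auto simp: max_excess_le_iff[OF assms(1,2)])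
qed

section \<open>Closed convex sets with the finite intersection property\<close>

lemma common_closure_point_from_approximants:
  fixes u :: "nat \<Rightarrow> 'a::complete_space"
  assumes "I \<noteq> {}" and "\<epsilon> \<longlonglongrightarrow> 0"
    and approx: "\<And>i n m. i \<in> I \<Longrightarrow> \<exists>w\<in>K i. dist w (u n) \<le> \<epsilon> n \<and> dist w (u m) \<le> \<epsilon> m"
  shows "\<exists>x. \<forall>i\<in>I. x \<in> closure (K i)"
proof -
  have dist_u: "dist (u n) (u m) \<le> \<epsilon> n + \<epsilon> m" for n m
  proof -
    obtain i where "i \<in> I"
      using assms(1) by blast
    then obtain w where "dist w (u n) \<le> \<epsilon> n" "dist w (u m) \<le> \<epsilon> m"
      using approx by blast
    then show ?thesis
      using dist_triangle3[of "u n" "u m" w] by linarith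
  qed
  have "Cauchy u"
  proof (rule metric_CauchyI)
    fix e :: real assume "0 < e"
    then obtain M where M: "\<And>n. n \<ge> M \<Longrightarrow> \<epsilon> n < e / 2"
      using order_tendstoD(2)[OF assms(2), of "e / 2"] by (auto simp: eventually_sequentially)
    have "dist (u m) (u n) < e" if "m \<ge> M" "n \<ge> M" for m n
      using dist_u[of m n] M[OF that(1)] M[OF that(2)] by linarith
    then show "\<exists>M. \<forall>m\<ge>M. \<forall>n\<ge>M. dist (u m) (u n) < e"
      by blast
  qed
  then obtain x where x: "u \<longlonglongrightarrow> x"
    using Cauchy_convergent_iff convergent_def by blast
  have "x \<in> closure (K i)" if i: "i \<in> I" for i
  proof -
    have "\<forall>n. \<exists>w. w \<in> K i \<and> dist w (u n) \<le> \<epsilon> n"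
      using approx[OF i] by blast
    then obtain w where w: "\<forall>n. w n \<in> K i \<and> dist (w n) (u n) \<le> \<epsilon> n"
      by (rule choice[THEN exE])
    have lim: "(\<lambda>n. \<epsilon> n + dist (u n) x) \<longlonglongrightarrow> 0"
      using tendsto_add[OF assms(2) tendsto_dist_iff[THEN iffD1, OF x]] by simp
    have le: "dist (w n) x \<le> \<epsilon> n + dist (u n) x" for n
      using w dist_triangle[of "w n" x "u n"] by (meson add_right_mono order_trans)
    have "(\<lambda>n. dist (w n) x) \<longlonglongrightarrow> 0"
      by (rule real_tendsto_sandwich[OF always_eventually always_eventually tendsto_const lim])
        (simp_all add: le)
    then have "w \<longlonglongrightarrow> x"
      by (rule tendsto_dist_iff[THEN iffD2])
    then show ?thesis
      using w closure_sequential by blast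
  qed
  then show ?thesis by blast
qed

definition inf_norm_sq :: "'a::real_normed_vector set \<Rightarrow> real" where
  "inf_norm_sq K = (INF u\<in>K. (norm u)\<^sup>2)"

lemma bdd_below_norm_sq: "bdd_below ((\<lambda>u. (norm u)\<^sup>2) ` K)"
  by (rule bdd_belowI[of _ 0]) auto

lemma inf_norm_sq_le: "u \<in> K \<Longrightarrow> inf_norm_sq K \<le> (norm u)\<^sup>2"
  unfolding inf_norm_sq_def by (rule cINF_lower[OF bdd_below_norm_sq])

lemma inf_norm_sq_less:
  "K \<noteq> {} \<Longrightarrow> inf_norm_sq K < t \<Longrightarrow> \<exists>u\<in>K. (norm u)\<^sup>2 < t"
  unfolding inf_norm_sq_def using cINF_less_iff[OF _ bdd_below_norm_sq] by blast

lemma convex_near_minimal_norm_dist: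
  fixes x y :: "'a::real_inner"
  assumes "convex K" "x \<in> K" "y \<in> K" "\<forall>w\<in>K. s - e \<le> (norm w)\<^sup>2"
    and "(norm x)\<^sup>2 \<le> s + e" "(norm y)\<^sup>2 \<le> s + e"
  shows "dist x y \<le> sqrt (8 * e)"
proof -
  have "(1/2) *\<^sub>R (x + y) \<in> K"
    using convexD[OF assms(1-3), of "1/2" "1/2"] by (simp add: scaleR_add_right)
  then have "s - e \<le> (norm ((1/2) *\<^sub>R (x + y)))\<^sup>2"
    using assms(4) by blast
  moreover have "4 * (norm ((1/2) *\<^sub>R (x + y)))\<^sup>2 = 2 * (norm x)\<^sup>2 + 2 * (norm y)\<^sup>2 - (norm (x - y))\<^sup>2"
    unfolding power2_norm_eq_inner by (simp add: inner_add inner_diff inner_commute algebra_simps)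
  ultimately have "(norm (x - y))\<^sup>2 \<le> 8 * e"
    using assms(5,6) by linarith
  then show ?thesis
    by (simp add: dist_norm real_le_rsqrt)
qed

lemma bdd_above_inf_norm_sq:
  assumes "bounded (\<Union>i\<in>I. K i)" "\<And>i. i \<in> I \<Longrightarrow> K i \<noteq> {}"
  shows "bdd_above ((\<lambda>i. inf_norm_sq (K i)) ` I)"
proof -
  obtain r where r: "\<And>i w. i \<in> I \<Longrightarrow> w \<in> K i \<Longrightarrow> norm w \<le> r"
    using assms(1) by (auto simp: bounded_iff)
  have "inf_norm_sq (K i) \<le> r\<^sup>2" if i: "i \<in> I" for i
  proof -
    obtain w where "w \<in> K i"
      using assms(2)[OF i] by blast
    then have "inf_norm_sq (K i) \<le> (norm w)\<^sup>2" "norm w \<le> r"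
      using inf_norm_sq_le r[OF i] by auto
    then show ?thesis
      using power_mono[OF _ norm_ge_zero, of w r 2] by linarith
  qed
  then show ?thesis
    by (rule bdd_aboveI2)
qed

(* Let \<sigma> be the supremum of the minimal squared norms of the K i. The approximants u n are points
   of squared norm below \<sigma> + \<delta> n in members whose minimal squared norm exceeds \<sigma> - \<delta> n, so that
   by convex_near_minimal_norm_dist every such point of these members is close to u n. *)
lemma convex_directed_family_approximants:
  fixes K :: "'i \<Rightarrow> 'a::real_inner set"
  assumes "I \<noteq> {}"
    and convex: "\<And>i. i \<in> I \<Longrightarrow> convex (K i)"
    and nonempty: "\<And>i. i \<in> I \<Longrightarrow> K i \<noteq> {}"
    and bounded: "bounded (\<Union>i\<in>I. K i)"
    and directed: "\<And>i j. i \<in> I \<Longrightarrow> j \<in> I \<Longrightarrow> \<exists>k\<in>I. K k \<subseteq> K i \<inter> K j"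
  shows "\<exists>u \<epsilon>. \<epsilon> \<longlonglongrightarrow> 0 \<and> (\<forall>i\<in>I. \<forall>n m. \<exists>w\<in>K i. dist w (u n) \<le> \<epsilon> n \<and> dist w (u m) \<le> \<epsilon> m)"
proof -
  have bdd: "bdd_above ((\<lambda>i. inf_norm_sq (K i)) ` I)"
    using bounded nonempty by (rule bdd_above_inf_norm_sq)
  define \<sigma> where "\<sigma> = (SUP i\<in>I. inf_norm_sq (K i))"
  have below_\<sigma>: "\<exists>w\<in>K i. (norm w)\<^sup>2 < \<sigma> + e" if "i \<in> I" "0 < e" for i e
    using inf_norm_sq_less[OF nonempty] cSUP_upper[OF _ bdd] that by (force simp: \<sigma>_def)
  define \<delta> where "\<delta> n = inverse (real (Suc n))" for n
  have "\<exists>i\<in>I. \<sigma> - \<delta> n < inf_norm_sq (K i)" for n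
    using less_cSUP_iff[OF assms(1) bdd, of "\<sigma> - \<delta> n"] by (simp add: \<sigma>_def \<delta>_def)
  then obtain \<iota> where \<iota>: "\<And>n. \<iota> n \<in> I" "\<And>n. \<sigma> - \<delta> n < inf_norm_sq (K (\<iota> n))"
    by metis
  have "\<exists>w\<in>K (\<iota> n). (norm w)\<^sup>2 < \<sigma> + \<delta> n" for n
    using below_\<sigma>[OF \<iota>(1)] by (simp add: \<delta>_def)
  then obtain u where u: "\<And>n. u n \<in> K (\<iota> n)" "\<And>n. (norm (u n))\<^sup>2 < \<sigma> + \<delta> n"
    by metis
  have close: "dist w (u n) \<le> sqrt (8 * \<delta> n)"
    if "w \<in> K (\<iota> n)" "(norm w)\<^sup>2 \<le> \<sigma> + \<delta> n" for w n
  proof (rule convex_near_minimal_norm_dist[OF convex[OF \<iota>(1)] that(1) u(1) _ that(2)])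
    show "\<forall>v\<in>K (\<iota> n). \<sigma> - \<delta> n \<le> (norm v)\<^sup>2"
      using \<iota>(2)[of n] inf_norm_sq_le by fastforce
    show "(norm (u n))\<^sup>2 \<le> \<sigma> + \<delta> n"
      using u(2)[of n] by simp
  qed
  show ?thesis
  proof (intro exI conjI ballI allI)
    show "(\<lambda>n. sqrt (8 * \<delta> n)) \<longlonglongrightarrow> 0"
      using tendsto_real_sqrt[OF tendsto_mult[OF tendsto_const LIMSEQ_inverse_real_of_nat]]
      by (simp add: \<delta>_def)
    fix i n m assume "i \<in> I"
    obtain k where k: "k \<in> I" "K k \<subseteq> K i \<inter> K (\<iota> n)"
      using directed[OF \<open>i \<in> I\<close> \<iota>(1)] by blast
    obtain k' where k': "k' \<in> I" "K k' \<subseteq> K k \<inter> K (\<iota> m)"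
      using directed[OF k(1) \<iota>(1)] by blast
    obtain w where w: "w \<in> K k'" "(norm w)\<^sup>2 < \<sigma> + min (\<delta> n) (\<delta> m)"
      using below_\<sigma>[OF k'(1), of "min (\<delta> n) (\<delta> m)"] by (auto simp: \<delta>_def)
    show "\<exists>w\<in>K i. dist w (u n) \<le> sqrt (8 * \<delta> n) \<and> dist w (u m) \<le> sqrt (8 * \<delta> m)"
    proof (intro bexI conjI)
      show "w \<in> K i" "dist w (u n) \<le> sqrt (8 * \<delta> n)" "dist w (u m) \<le> sqrt (8 * \<delta> m)"
        using w k k' close[of w n] close[of w m] by auto
    qed
  qed
qed

lemma Inter_closed_convex_nonempty:
  fixes \<C> :: "'a::{real_inner,complete_space} set set"
  assumes closed: "\<And>S. S \<in> \<C> \<Longrightarrow> closed S" and convex: "\<And>S. S \<in> \<C> \<Longrightarrow> convex S"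
    and "S\<^sub>0 \<in> \<C>" "bounded S\<^sub>0"
    and finite_Inter: "\<And>\<F>. finite \<F> \<Longrightarrow> \<F> \<subseteq> \<C> \<Longrightarrow> \<F> \<noteq> {} \<Longrightarrow> \<Inter>\<F> \<noteq> {}"
  shows "\<Inter>\<C> \<noteq> {}"
proof -
  define K where "K \<F> = \<Inter>(insert S\<^sub>0 \<F>)" for \<F>
  let ?I = "{\<F>. finite \<F> \<and> \<F> \<subseteq> \<C>}"
  have "\<exists>(u :: nat \<Rightarrow> 'a) \<epsilon>. \<epsilon> \<longlonglongrightarrow> 0 \<and>
    (\<forall>\<F>\<in>?I. \<forall>n m. \<exists>w\<in>K \<F>. dist w (u n) \<le> \<epsilon> n \<and> dist w (u m) \<le> \<epsilon> m)"
  proof (rule convex_directed_family_approximants)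
    show "?I \<noteq> {}"
      by blast
    show "convex (K \<F>)" if "\<F> \<in> ?I" for \<F>
      using that convex \<open>S\<^sub>0 \<in> \<C>\<close> unfolding K_def by (intro convex_Inter) auto
    show "K \<F> \<noteq> {}" if "\<F> \<in> ?I" for \<F>
      using that \<open>S\<^sub>0 \<in> \<C>\<close> finite_Inter[of "insert S\<^sub>0 \<F>"] unfolding K_def by auto
    show "bounded (\<Union>\<F>\<in>?I. K \<F>)"
      using \<open>bounded S\<^sub>0\<close> by (rule bounded_subset) (auto simp: K_def)
    show "\<exists>\<H>\<in>?I. K \<H> \<subseteq> K \<F> \<inter> K \<G>" if "\<F> \<in> ?I" "\<G> \<in> ?I" for \<F> \<G>
      using that by (intro bexI[of _ "\<F> \<union> \<G>"]) (auto simp: K_def)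
  qed
  then obtain u :: "nat \<Rightarrow> 'a" and \<epsilon> where \<epsilon>: "\<epsilon> \<longlonglongrightarrow> 0"
    and approx: "\<And>\<F> n m. \<F> \<in> ?I \<Longrightarrow> \<exists>w\<in>K \<F>. dist w (u n) \<le> \<epsilon> n \<and> dist w (u m) \<le> \<epsilon> m"
    by blast
  have "?I \<noteq> {}"
    by blast
  then have "\<exists>x. \<forall>\<F>\<in>?I. x \<in> closure (K \<F>)"
    by (rule common_closure_point_from_approximants[OF _ \<epsilon> approx])
  then obtain x where x: "\<And>\<F>. \<F> \<in> ?I \<Longrightarrow> x \<in> closure (K \<F>)"
    by blast
  have "x \<in> S" if "S \<in> \<C>" for S
  proof -
    have "closed (K {S})"
      using that \<open>S\<^sub>0 \<in> \<C>\<close> closed by (auto simp: K_def)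
    then show ?thesis
      using x[of "{S}"] that by (simp add: K_def)
  qed
  then show ?thesis
    by blast
qed

section \<open>The Kirszbraun-Valentine extension\<close>

lemma nonexpansive_one_point_extension:
  fixes G :: "('a::{real_inner,complete_space} \<times> 'a) set"
  assumes nonexp: "\<And>x a y b. (x, a) \<in> G \<Longrightarrow> (y, b) \<in> G \<Longrightarrow> norm (a - b) \<le> norm (x - y)"
  shows "\<exists>w. \<forall>(x, a)\<in>G. norm (w - a) \<le> norm (z - x)"
proof (cases "G = {}")
  case False
  define B where "B k = cball (snd k) (norm (z - fst k))" for k :: "'a \<times> 'a"
  have B_iff: "w \<in> B k \<longleftrightarrow> norm (w - snd k) \<le> norm (z - fst k)" for w k
    by (simp add: B_def dist_commute dist_norm)
  obtain k\<^sub>0 where "k\<^sub>0 \<in> G"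
    using False by blast
  have "\<Inter>(B ` G) \<noteq> {}"
  proof (rule Inter_closed_convex_nonempty[of _ "B k\<^sub>0"])
    show "B k\<^sub>0 \<in> B ` G" "bounded (B k\<^sub>0)"
      using \<open>k\<^sub>0 \<in> G\<close> by (auto simp: B_def)
    fix \<F> assume "finite \<F>" "\<F> \<subseteq> B ` G" "\<F> \<noteq> {}"
    then obtain F where F: "finite F" "F \<noteq> {}" "F \<subseteq> G" "\<F> = B ` F"
      by (metis finite_subset_image image_is_empty)
    have "\<exists>w. \<forall>k\<in>F. (norm (w - snd k))\<^sup>2 \<le> (norm (z - fst k))\<^sup>2"
    proof (rule finite_balls_common_point[OF F(1,2)])
      fix I and l :: "'a \<times> 'a \<Rightarrow> real"
      assume "I \<subseteq> F" "I \<noteq> {}" "\<forall>i\<in>I. 0 \<le> l i" "sum l I = 1"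
      moreover have "\<forall>k\<in>I. \<forall>j\<in>I. norm (snd k - snd j) \<le> norm (fst k - fst j)"
        using \<open>I \<subseteq> F\<close> F(3) nonexp by fastforce
      ultimately show "\<exists>k\<in>I. (norm ((\<Sum>i\<in>I. l i *\<^sub>R snd i) - snd k))\<^sup>2 \<le> (norm (z - fst k))\<^sup>2"
        using barycentre_in_some_ball by blast
    qed
    then obtain w where "\<forall>k\<in>F. w \<in> B k"
      using power2_le_imp_le[OF _ norm_ge_zero] by (auto simp: B_iff)
    then show "\<Inter>\<F> \<noteq> {}"
      using F(4) by blast
  qed (auto simp: B_def)
  then obtain w where "\<forall>k\<in>G. norm (w - snd k) \<le> norm (z - fst k)"
    unfolding B_iff[symmetric] by blast
  then show ?thesis
    by (auto simp: case_prod_beta)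
qed simp

section \<open>Comonotone operators\<close>

lemma norm_reflection_le_iff:
  fixes d e :: "'a::real_inner"
  assumes "\<mu> > 0"
  shows "norm ((2 * \<mu>) *\<^sub>R d - e) \<le> norm e \<longleftrightarrow> \<mu> * (norm d)\<^sup>2 \<le> inner d e"
proof -
  have "(norm ((2 * \<mu>) *\<^sub>R d - e))\<^sup>2 = (norm e)\<^sup>2 + 4 * \<mu> * (\<mu> * (norm d)\<^sup>2 - inner d e)"
    unfolding power2_norm_eq_inner by (simp add: inner_diff inner_commute algebra_simps power2_eq_square)
  then have "norm ((2 * \<mu>) *\<^sub>R d - e) \<le> norm e \<longleftrightarrow> 4 * \<mu> * (\<mu> * (norm d)\<^sup>2 - inner d e) \<le> 0"
    by (metis add_le_same_cancel1 norm_ge_zero power2_le_iff_abs_le abs_norm_cancel)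
  also have "\<dots> \<longleftrightarrow> \<mu> * (norm d)\<^sup>2 \<le> inner d e"
    using assms by (simp add: mult_le_0_iff)
  finally show ?thesis .
qed

lemma comonotone_Id_plus_inj:
  fixes A :: "'a::real_inner \<Rightarrow> 'a set"
  assumes "\<rho> > -1" "comonotone \<rho> A" "u \<in> A p" "u' \<in> A p'" "p + u = p' + u'"
  shows "p = p'" "u = u'"
proof -
  have "\<rho> * (norm (u - u'))\<^sup>2 \<le> inner (p - p') (u - u')"
    using assms(2-4) unfolding comonotone_def by blast
  also have "p - p' = - (u - u')"
    using assms(5) by (simp add: algebra_simps)
  then have "inner (p - p') (u - u') = - (norm (u - u'))\<^sup>2"
    unfolding power2_norm_eq_inner by (simp only: inner_minus_left)
  finally have "(1 + \<rho>) * (norm (u - u'))\<^sup>2 \<le> 0"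
    by (simp add: algebra_simps)
  then show "u = u'"
    using assms(1) by (simp add: mult_le_0_iff)
  then show "p = p'"
    using assms(5) by simp
qed

lemma resolvent_Id_plus:
  fixes A :: "'a::real_inner \<Rightarrow> 'a set"
  assumes "\<rho> > -1" "comonotone \<rho> A" "u \<in> A p"
  shows "resolvent A (p + u) = p"
  unfolding resolvent_def
proof (rule the_equality)
  show "p + u - p \<in> A p"
    using assms(3) by simp
  show "q = p" if "p + u - q \<in> A q" for q
    using comonotone_Id_plus_inj(1)[OF assms(1,2) that assms(3)] by simp
qed

lemma gra_eq_resolvent_image:
  fixes A :: "'a::real_inner \<Rightarrow> 'a set"
  assumes "\<rho> > -1" "comonotone \<rho> A"
  shows "gra A = {(resolvent A x, x - resolvent A x) | x. x \<in> ran_Id_plus A}"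
  unfolding gra_def ran_Id_plus_def using resolvent_Id_plus[OF assms] by force

lemma comonotone_insert:
  assumes "comonotone \<rho> A"
    and "\<And>y v. v \<in> A y \<Longrightarrow> \<rho> * (norm (u - v))\<^sup>2 \<le> inner (p - y) (u - v)"
  shows "comonotone \<rho> (A(p := insert u (A p)))"
  unfolding comonotone_def
proof (intro allI impI)
  have sym: "inner (x - y) (a - b) = inner (y - x) (b - a)" for x y a b :: 'a
    by (simp add: inner_diff inner_commute)
  fix x a y b
  assume "a \<in> (A(p := insert u (A p))) x" "b \<in> (A(p := insert u (A p))) y"
  then consider "a \<in> A x" "b \<in> A y" | "a \<in> A x" "y = p" "b = u"
    | "x = p" "a = u" "b \<in> A y" | "x = p" "a = u" "y = p" "b = u"
    by (auto split: if_splits)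
  then show "\<rho> * (norm (a - b))\<^sup>2 \<le> inner (x - y) (a - b)"
  proof cases
    case 1
    then show ?thesis
      using assms(1) unfolding comonotone_def by blast
  next
    case 2
    then show ?thesis
      using assms(2)[of a x] sym[of p x u a] by (simp add: norm_minus_commute)
  next
    case 3
    then show ?thesis
      using assms(2)[of b y] by simp
  qed simp
qed

lemma comonotone_extension_point:
  fixes A :: "'a::{real_inner,complete_space} \<Rightarrow> 'a set"
  assumes "\<rho> > -1" "comonotone \<rho> A"
  obtains u where "\<And>y v. v \<in> A y \<Longrightarrow> \<rho> * (norm (u - v))\<^sup>2 \<le> inner ((z - u) - y) (u - v)"
proof -
  define \<mu> where "\<mu> = 1 + \<rho>"
  have "\<mu> > 0"
    using assms(1) by (simp add: \<mu>_def)
  have cocoercive: "\<mu> * (norm (v - v'))\<^sup>2 \<le> inner (v - v') ((y + v) - (y' + v'))"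
    if "v \<in> A y" "v' \<in> A y'" for y v y' v'
  proof -
    have "\<rho> * (norm (v - v'))\<^sup>2 \<le> inner (y - y') (v - v')"
      using assms(2) that unfolding comonotone_def by blast
    then show ?thesis
      by (simp add: \<mu>_def power2_norm_eq_inner inner_diff inner_add inner_commute algebra_simps)
  qed
  define G where "G = {(y + v, (2 * \<mu>) *\<^sub>R v - (y + v)) | y v. v \<in> A y}"
  have "norm (a - b) \<le> norm (x - x')" if xa: "(x, a) \<in> G" and xb: "(x', b) \<in> G" for x a x' b
  proof -
    obtain y v y' v' where "v \<in> A y" "v' \<in> A y'" and x: "x = y + v" "x' = y' + v'"
      and ab: "a = (2 * \<mu>) *\<^sub>R v - (y + v)" "b = (2 * \<mu>) *\<^sub>R v' - (y' + v')"
      using xa xb unfolding G_def by blast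
    have diff: "a - b = (2 * \<mu>) *\<^sub>R (v - v') - (x - x')"
      unfolding x ab by (simp add: algebra_simps)
    show ?thesis
      unfolding diff x using cocoercive[OF \<open>v \<in> A y\<close> \<open>v' \<in> A y'\<close>]
      by (rule norm_reflection_le_iff[OF \<open>\<mu> > 0\<close>, THEN iffD2])
  qed
  then obtain w where w: "\<forall>(x, a)\<in>G. norm (w - a) \<le> norm (z - x)"
    using nonexpansive_one_point_extension by blast
  show thesis
  proof
    fix y v assume "v \<in> A y"
    define u where "u = (1 / (2 * \<mu>)) *\<^sub>R (w + z)"
    have "(y + v, (2 * \<mu>) *\<^sub>R v - (y + v)) \<in> G"
      using \<open>v \<in> A y\<close> unfolding G_def by blast
    then have "norm (w - ((2 * \<mu>) *\<^sub>R v - (y + v))) \<le> norm (z - (y + v))"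
      using w by blast
    moreover have "w - ((2 * \<mu>) *\<^sub>R v - (y + v)) = (2 * \<mu>) *\<^sub>R (u - v) - (z - (y + v))"
      using \<open>\<mu> > 0\<close> by (simp add: u_def algebra_simps)
    ultimately have "norm ((2 * \<mu>) *\<^sub>R (u - v) - (z - (y + v))) \<le> norm (z - (y + v))"
      by simp
    then have "\<mu> * (norm (u - v))\<^sup>2 \<le> inner (u - v) (z - (y + v))"
      by (rule norm_reflection_le_iff[OF \<open>\<mu> > 0\<close>, THEN iffD1])
    then show "\<rho> * (norm (u - v))\<^sup>2 \<le> inner ((z - u) - y) (u - v)"
      by (simp add: \<mu>_def power2_norm_eq_inner inner_diff inner_commute algebra_simps)
  qed
qed

lemma ran_Id_plus_UNIV_if_max_comonotone:
  fixes A :: "'a::{real_inner,complete_space} \<Rightarrow> 'a set"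
  assumes "\<rho> > -1" "max_comonotone \<rho> A"
  shows "ran_Id_plus A = UNIV"
proof -
  have "z \<in> ran_Id_plus A" for z
  proof -
    have "comonotone \<rho> A"
      using assms(2) by (simp add: max_comonotone_def)
    then obtain u where "\<And>y v. v \<in> A y \<Longrightarrow> \<rho> * (norm (u - v))\<^sup>2 \<le> inner ((z - u) - y) (u - v)"
      using comonotone_extension_point assms(1) by blast
    with \<open>comonotone \<rho> A\<close> have "comonotone \<rho> (A(z - u := insert u (A (z - u))))"
      by (rule comonotone_insert)
    moreover have "gra A \<subseteq> gra (A(z - u := insert u (A (z - u))))"
      by (auto simp: gra_def)
    ultimately have "gra (A(z - u := insert u (A (z - u)))) = gra A"
      using assms(2) unfolding max_comonotone_def by blast
    moreover have "(z - u, u) \<in> gra (A(z - u := insert u (A (z - u))))"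
      by (simp add: gra_def)
    ultimately have "u \<in> A (z - u)"
      by (simp add: gra_def)
    then show ?thesis
      unfolding ran_Id_plus_def by force
  qed
  then show ?thesis
    by blast
qed

lemma max_comonotone_if_ran_Id_plus_UNIV:
  fixes A :: "'a::real_inner \<Rightarrow> 'a set"
  assumes "\<rho> > -1" "comonotone \<rho> A" "ran_Id_plus A = UNIV"
  shows "max_comonotone \<rho> A"
  unfolding max_comonotone_def
proof (intro conjI allI impI)
  fix B assume B: "comonotone \<rho> B" "gra A \<subseteq> gra B"
  have "u \<in> A p" if "u \<in> B p" for p u
  proof -
    obtain p' u' where "u' \<in> A p'" "p + u = p' + u'"
      using assms(3) unfolding ran_Id_plus_def by blast
    moreover from this have "u' \<in> B p'"
      using B(2) by (auto simp: gra_def)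
    ultimately show ?thesis
      using comonotone_Id_plus_inj[OF assms(1) B(1) that] by metis
  qed
  with B(2) show "gra B = gra A"
    by (auto simp: gra_def)
qed (rule assms(2))

theorem theorem2p16:
  fixes A :: "'a::{real_inner, complete_space} \<Rightarrow> 'a set" and \<rho> :: real
  assumes "\<rho> > -1" and "comonotone \<rho> A"
  shows "gra A = {(resolvent A x, x - resolvent A x) | x. x \<in> ran_Id_plus A}
         \<and> (max_comonotone \<rho> A \<longleftrightarrow> ran_Id_plus A = UNIV)
         \<and> (max_comonotone \<rho> A \<longrightarrow> gra A = {(resolvent A x, x - resolvent A x) | x. True})"
proof (intro conjI impI)
  show gra: "gra A = {(resolvent A x, x - resolvent A x) | x. x \<in> ran_Id_plus A}"
    by (rule gra_eq_resolvent_image[OF assms])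
  show max_iff: "max_comonotone \<rho> A \<longleftrightarrow> ran_Id_plus A = UNIV"
    using ran_Id_plus_UNIV_if_max_comonotone max_comonotone_if_ran_Id_plus_UNIV assms by blast
  assume "max_comonotone \<rho> A"
  then show "gra A = {(resolvent A x, x - resolvent A x) | x. True}"
    using gra max_iff by simp
qed

end
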